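(* Let $G$ be a connected graph and let $v$ be a cut-vertex of $G$, where $G_1, \ldots, G_c$ are the connected components of $G - \{v\}$. Then for any minimal fort $F$ of $G$ with $v \notin F$, at most two indices $i$ satisfy $V(G_i) \cap F \neq \emptyset$.
   Context: Graphs are finite and simple. A fort of a graph $G$ is a nonempty set $F\subseteq V(G)$ such that every vertex outside $F$ is adjacent to either zero or at least two vertices of $F$; it is minimal if no proper subset is a fort. *)

theory Defs
  imports Main
begin

definition simple_graph :: "'a set \<Rightarrow> ('a \<Rightarrow> 'a \<Rightarrow> bool) \<Rightarrow> bool" where
  "simple_graph V E \<longleftrightarrow> finite V \<and> (\<forall>x y. E x y \<longrightarrow> x \<in> V \<and> y \<in> V)
     \<and> (\<forall>x y. E x y \<longrightarrow> E y x) \<and> (\<forall>x. \<not> E x x)"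

definition reach_in :: "('a \<Rightarrow> 'a \<Rightarrow> bool) \<Rightarrow> 'a set \<Rightarrow> 'a \<Rightarrow> 'a \<Rightarrow> bool" where
  "reach_in E S x y \<longleftrightarrow> x \<in> S \<and> y \<in> S \<and> (\<lambda>a b. E a b \<and> a \<in> S \<and> b \<in> S)\<^sup>*\<^sup>* x y"

definition connected_graph :: "'a set \<Rightarrow> ('a \<Rightarrow> 'a \<Rightarrow> bool) \<Rightarrow> bool" where
  "connected_graph V E \<longleftrightarrow> V \<noteq> {} \<and> (\<forall>x\<in>V. \<forall>y\<in>V. reach_in E V x y)"

definition components_in :: "('a \<Rightarrow> 'a \<Rightarrow> bool) \<Rightarrow> 'a set \<Rightarrow> 'a set set" where
  "components_in E S = {{y. reach_in E S x y} | x. x \<in> S}"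

definition cut_vertex :: "'a set \<Rightarrow> ('a \<Rightarrow> 'a \<Rightarrow> bool) \<Rightarrow> 'a \<Rightarrow> bool" where
  "cut_vertex V E v \<longleftrightarrow> v \<in> V \<and> card (components_in E (V - {v})) \<ge> 2"

definition fort :: "'a set \<Rightarrow> ('a \<Rightarrow> 'a \<Rightarrow> bool) \<Rightarrow> 'a set \<Rightarrow> bool" where
  "fort V E F \<longleftrightarrow> F \<noteq> {} \<and> F \<subseteq> V \<and>
     (\<forall>u\<in>V - F. card {w\<in>F. E u w} \<noteq> 1)"

definition minimal_fort :: "'a set \<Rightarrow> ('a \<Rightarrow> 'a \<Rightarrow> bool) \<Rightarrow> 'a set \<Rightarrow> bool" where
  "minimal_fort V E F \<longleftrightarrow> fort V E F \<and> (\<forall>F'. F' \<subset> F \<longrightarrow> \<not> fort V E F')"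

end

theory Submission
  imports Defs
begin

text \<open>Let \<open>U\<close> be a union of components of \<open>G - v\<close> meeting the fort \<open>F\<close>, where \<open>v \<notin> F\<close>.
  A vertex of \<open>U\<close> sees the same neighbours in \<open>F \<inter> U\<close> as in \<open>F\<close>, and a vertex outside
  \<open>U \<union> {v}\<close> sees none, so \<open>F \<inter> U\<close> is again a fort unless \<open>v\<close> has exactly one neighbour
  in it. If three components \<open>C\<^sub>1, C\<^sub>2, C\<^sub>3\<close> met a minimal fort \<open>F\<close>, then \<open>F \<inter> C\<^sub>1\<close>,
  \<open>F \<inter> C\<^sub>2\<close> and \<open>F \<inter> (C\<^sub>1 \<union> C\<^sub>2)\<close> are proper subsets of \<open>F\<close> (they miss \<open>C\<^sub>3\<close>), so \<open>v\<close>
  would have exactly one neighbour in each of them, which is impossible for the union.\<close>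

lemma reach_in_sym:
  assumes sym: "\<forall>x y. E x y \<longrightarrow> E y x" and "reach_in E S x y"
  shows "reach_in E S y x"
proof -
  let ?r = "\<lambda>a b. E a b \<and> a \<in> S \<and> b \<in> S"
  have "?r\<^sup>*\<^sup>* x y" using assms(2) unfolding reach_in_def by blast
  then have "?r\<^sup>*\<^sup>* y x"
  proof (induction rule: rtranclp_induct)
    case base
    then show ?case by simp
  next
    case (step b c)
    then have "?r c b" using sym by blast
    then show ?case using step.IH by (rule converse_rtranclp_into_rtranclp)
  qed
  then show ?thesis using assms(2) unfolding reach_in_def by blast
qed

lemma reach_in_trans:
  "reach_in E S x y \<Longrightarrow> reach_in E S y z \<Longrightarrow> reach_in E S x z"
  unfolding reach_in_def by (meson rtranclp_trans)

lemma components_in_edge_closed: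
  assumes "C \<in> components_in E S" "y \<in> C" "z \<in> S" "E y z"
  shows "z \<in> C"
proof -
  obtain x where C: "C = {y. reach_in E S x y}"
    using assms(1) unfolding components_in_def by blast
  have "reach_in E S x y" using assms(2) C by blast
  moreover have "reach_in E S y z"
    using assms(2-4) calculation unfolding reach_in_def by (simp add: r_into_rtranclp)
  ultimately have "reach_in E S x z" by (rule reach_in_trans)
  then show ?thesis using C by simp
qed

lemma Union_components_in_edge_closed:
  assumes "\<C> \<subseteq> components_in E S"
  shows "\<forall>x y. x \<in> \<Union>\<C> \<longrightarrow> y \<in> S \<longrightarrow> E x y \<longrightarrow> y \<in> \<Union>\<C>"
proof (intro allI impI)
  fix x y assume "x \<in> \<Union>\<C>" "y \<in> S" "E x y"
  then obtain C where "C \<in> \<C>" "x \<in> C" by blast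
  with assms have "C \<in> components_in E S" by blast
  then have "y \<in> C" using \<open>x \<in> C\<close> \<open>y \<in> S\<close> \<open>E x y\<close> by (rule components_in_edge_closed)
  with \<open>C \<in> \<C>\<close> show "y \<in> \<Union>\<C>" by blast
qed

lemma components_in_disjoint:
  assumes sym: "\<forall>x y. E x y \<longrightarrow> E y x"
    and "C\<^sub>1 \<in> components_in E S" "C\<^sub>2 \<in> components_in E S" "C\<^sub>1 \<noteq> C\<^sub>2"
  shows "C\<^sub>1 \<inter> C\<^sub>2 = {}"
proof (rule ccontr)
  assume "C\<^sub>1 \<inter> C\<^sub>2 \<noteq> {}"
  then obtain z where z: "z \<in> C\<^sub>1" "z \<in> C\<^sub>2" by blast
  obtain x\<^sub>1 where x\<^sub>1: "C\<^sub>1 = {y. reach_in E S x\<^sub>1 y}"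
    using assms(2) unfolding components_in_def by blast
  obtain x\<^sub>2 where x\<^sub>2: "C\<^sub>2 = {y. reach_in E S x\<^sub>2 y}"
    using assms(3) unfolding components_in_def by blast
  have "reach_in E S x\<^sub>1 z" "reach_in E S x\<^sub>2 z" using z x\<^sub>1 x\<^sub>2 by simp_all
  then have "reach_in E S x\<^sub>1 x\<^sub>2" "reach_in E S x\<^sub>2 x\<^sub>1"
    by (meson reach_in_sym[OF sym] reach_in_trans)+
  then have "C\<^sub>1 = C\<^sub>2"
    unfolding x\<^sub>1 x\<^sub>2 by (auto intro: reach_in_trans)
  with assms(4) show False ..
qed

lemma fort_finite: "simple_graph V E \<Longrightarrow> fort V E F \<Longrightarrow> finite F"
  unfolding simple_graph_def fort_def by (blast intro: finite_subset)

lemma fort_inter_edge_closed: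
  assumes sg: "simple_graph V E" and fort: "fort V E F" and "v \<notin> F"
    and closed: "\<forall>x y. x \<in> U \<longrightarrow> y \<in> V - {v} \<longrightarrow> E x y \<longrightarrow> y \<in> U"
    and meets: "F \<inter> U \<noteq> {}"
    and v_nbrs: "card {w \<in> F \<inter> U. E v w} \<noteq> 1"
  shows "fort V E (F \<inter> U)"
  unfolding fort_def
proof (intro conjI ballI)
  show "F \<inter> U \<noteq> {}" by (fact meets)
  show "F \<inter> U \<subseteq> V" using fort unfolding fort_def by blast
  fix u assume u: "u \<in> V - F \<inter> U"
  consider "u = v" | "u \<in> U" | "u \<noteq> v" "u \<notin> U" by blast
  then show "card {w \<in> F \<inter> U. E u w} \<noteq> 1"
  proof cases
    case 1
    then show ?thesis using v_nbrs by simp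
  next
    case 2
    have "{w \<in> F \<inter> U. E u w} = {w \<in> F. E u w}"
      using 2 closed fort \<open>v \<notin> F\<close> unfolding fort_def by blast
    then show ?thesis using fort u 2 unfolding fort_def by auto
  next
    case 3
    have "{w \<in> F \<inter> U. E u w} = {}"
      using 3 u closed sg unfolding simple_graph_def by blast
    then show ?thesis by (simp only: card.empty)
  qed
qed

lemma minimal_fort_unique_neighbour_in_components:
  assumes "simple_graph V E" "minimal_fort V E F" "v \<notin> F"
    and \<C>: "\<C> \<subseteq> components_in E (V - {v})"
    and "F \<inter> \<Union>\<C> \<noteq> {}" "\<not> F \<subseteq> \<Union>\<C>"
  shows "card {w \<in> F \<inter> \<Union>\<C>. E v w} = 1"
proof (rule ccontr)
  assume v_nbrs: "card {w \<in> F \<inter> \<Union>\<C>. E v w} \<noteq> 1"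
  have "fort V E F" using assms(2) unfolding minimal_fort_def by blast
  moreover have "\<forall>x y. x \<in> \<Union>\<C> \<longrightarrow> y \<in> V - {v} \<longrightarrow> E x y \<longrightarrow> y \<in> \<Union>\<C>"
    using \<C> by (rule Union_components_in_edge_closed)
  ultimately have "fort V E (F \<inter> \<Union>\<C>)"
    by (rule fort_inter_edge_closed[OF assms(1) _ assms(3) _ assms(5) v_nbrs])
  moreover have "F \<inter> \<Union>\<C> \<subset> F" using assms(6) by blast
  ultimately show False using assms(2) unfolding minimal_fort_def by blast
qed

lemma card_ge_3_obtain_distinct:
  assumes "3 \<le> card S"
  obtains a b c where "a \<in> S" "b \<in> S" "c \<in> S" "a \<noteq> b" "a \<noteq> c" "b \<noteq> c"
proof -
  obtain B where "B \<subseteq> S" "card B = 3"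
    using assms by (rule obtain_subset_with_card_n)
  then show ?thesis using that unfolding card_3_iff by blast
qed

theorem mainTheorem3:
  fixes V :: "'a set" and E :: "'a \<Rightarrow> 'a \<Rightarrow> bool" and v :: 'a and F :: "'a set"
  assumes "simple_graph V E"
    and "connected_graph V E"
    and "cut_vertex V E v"
    and "minimal_fort V E F"
    and "v \<notin> F"
  shows "card {C \<in> components_in E (V - {v}). C \<inter> F \<noteq> {}} \<le> 2"
proof (rule ccontr)
  let ?K = "components_in E (V - {v})"
  let ?nbrs = "\<lambda>\<C>. {w \<in> F \<inter> \<Union>\<C>. E v w}"
  assume "\<not> card {C \<in> ?K. C \<inter> F \<noteq> {}} \<le> 2"
  then have "3 \<le> card {C \<in> ?K. C \<inter> F \<noteq> {}}" by simp
  then obtain C\<^sub>1 C\<^sub>2 C\<^sub>3 where C: "C\<^sub>1 \<in> ?K" "C\<^sub>2 \<in> ?K" "C\<^sub>3 \<in> ?K"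
    and meets: "C\<^sub>1 \<inter> F \<noteq> {}" "C\<^sub>2 \<inter> F \<noteq> {}" "C\<^sub>3 \<inter> F \<noteq> {}"
    and distinct: "C\<^sub>1 \<noteq> C\<^sub>2" "C\<^sub>1 \<noteq> C\<^sub>3" "C\<^sub>2 \<noteq> C\<^sub>3"
    by (rule card_ge_3_obtain_distinct) auto
  have sym: "\<forall>x y. E x y \<longrightarrow> E y x" using assms(1) unfolding simple_graph_def by blast
  have disjoint: "C\<^sub>1 \<inter> C\<^sub>2 = {}" "C\<^sub>1 \<inter> C\<^sub>3 = {}" "C\<^sub>2 \<inter> C\<^sub>3 = {}"
    using components_in_disjoint[OF sym C(1,2) distinct(1)]
      components_in_disjoint[OF sym C(1,3) distinct(2)]
      components_in_disjoint[OF sym C(2,3) distinct(3)] by simp_all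
  have unique_nbr: "card (?nbrs \<C>) = 1" if "\<C> \<in> {{C\<^sub>1}, {C\<^sub>2}, {C\<^sub>1, C\<^sub>2}}" for \<C>
  proof (rule minimal_fort_unique_neighbour_in_components[OF assms(1,4,5)])
    show "\<C> \<subseteq> ?K" using that C by auto
    show "F \<inter> \<Union>\<C> \<noteq> {}" using that meets by auto
    show "\<not> F \<subseteq> \<Union>\<C>" using that meets(3) disjoint(2,3) by auto
  qed
  have "finite F" using assms(1,4) fort_finite unfolding minimal_fort_def by blast
  have "2 = card (?nbrs {C\<^sub>1}) + card (?nbrs {C\<^sub>2})"
    using unique_nbr[of "{C\<^sub>1}"] unique_nbr[of "{C\<^sub>2}"] by simp
  also have "\<dots> = card (?nbrs {C\<^sub>1} \<union> ?nbrs {C\<^sub>2})"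
    using \<open>finite F\<close> disjoint(1) by (intro card_Un_disjoint[symmetric]) auto
  also have "?nbrs {C\<^sub>1} \<union> ?nbrs {C\<^sub>2} = ?nbrs {C\<^sub>1, C\<^sub>2}" by blast
  also have "card \<dots> = 1" by (rule unique_nbr) simp
  finally show False by simp
qed

end
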